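(* Let $k$ be a positive integer. Among all real numbers $1\ge a_1\ge a_2\ge\dots\ge a_k\ge0$ with $\sum_{i=1}^k a_i=1$, the value of \[\prod_{i=1}^k\frac{(1+a_i)^{1+a_i}}{a_i^{2a_i}}\] (with the convention $0^0=1$) is maximized when $a_i=\frac1k$ for all $i$. *)

theory Defs
  imports Complex_Main
begin

definition pow00 :: "real \<Rightarrow> real \<Rightarrow> real" where
  "pow00 x y = (if x = 0 \<and> y = 0 then 1 else x powr y)"

definition lem_factor :: "real \<Rightarrow> real" where
  "lem_factor a = pow00 (1 + a) (1 + a) / pow00 a (2 * a)"

end

theory Submission
  imports Defs "HOL-Analysis.Convex"
begin

text \<open>Taking logarithms, each factor is exp (g a) with g = lem_exponent,
  g(a) = (1 + a) ln (1 + a) - 2 a ln a, and g'' (a) = 1/(1 + a) - 2/a < 0, so g is concave on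
  [0, \<infinity>). Summing the tangent-line bound of g at 1/k over the a_i, whose sum is 1, gives
  \<Sum> g(a_i) \<le> k g(1/k); exponentiating gives the claim.\<close>

definition lem_exponent :: "real \<Rightarrow> real" where
  "lem_exponent y = (1 + y) * ln (1 + y) - 2 * y * ln y"

lemma lem_factor_eq_exp:
  assumes "y \<ge> 0"
  shows "lem_factor y = exp (lem_exponent y)"
proof (cases "y = 0")
  case True
  then show ?thesis by (simp add: lem_factor_def pow00_def lem_exponent_def)
next
  case False
  with assms have "y > 0" by simp
  then show ?thesis
    by (simp add: lem_factor_def pow00_def lem_exponent_def powr_def exp_diff)
qed

lemma lem_exponent_le_tangent:
  assumes c: "c > 0" and y: "y \<ge> 0"
  shows "lem_exponent y \<le> lem_exponent c - (2 * ln c - ln (1 + c) + 1) * (y - c)"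
proof (cases "y = 0")
  case True
  have "ln (1 + c) \<ge> 0" using c by simp
  with True c show ?thesis by (simp add: lem_exponent_def algebra_simps)
next
  case False
  with y have "y > 0" by simp
  let ?f' = "\<lambda>x::real. 2 * ln x - ln (1 + x) + 1"
  let ?f'' = "\<lambda>x::real. 2 / x - 1 / (1 + x)"
  have "?f' c * (y - c) \<le> - lem_exponent y - - lem_exponent c"
  proof (rule f''_imp_f'[where C = "{0<..}" and f'' = ?f''])
    fix x :: real
    assume "x \<in> {0<..}"
    then have x: "x > 0" by simp
    show "((\<lambda>x. - lem_exponent x) has_real_derivative ?f' x) (at x)"
      unfolding lem_exponent_def by (rule derivative_eq_intros refl | use x in simp)+
    show "(?f' has_real_derivative ?f'' x) (at x)"
      by (rule derivative_eq_intros refl | use x in simp)+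
    have "1 / (1 + x) \<le> 2 / x" using x by (simp add: field_simps)
    then show "?f'' x \<ge> 0" by simp
  qed (use c \<open>y > 0\<close> in auto)
  then show ?thesis by simp
qed

lemma sum_lem_exponent_le:
  assumes "finite I" and "I \<noteq> {}"
    and nonneg: "\<And>i. i \<in> I \<Longrightarrow> a i \<ge> 0"
    and sum_one: "(\<Sum>i\<in>I. a i) = 1"
  shows "(\<Sum>i\<in>I. lem_exponent (a i)) \<le> card I * lem_exponent (1 / card I)"
proof -
  define c where "c = 1 / real (card I)"
  define slope where "slope = 2 * ln c - ln (1 + c) + 1"
  have c: "c > 0" and card_c: "real (card I) * c = 1"
    using assms(1,2) by (simp_all add: c_def card_gt_0_iff)
  have "(\<Sum>i\<in>I. lem_exponent (a i)) \<le> (\<Sum>i\<in>I. lem_exponent c - slope * (a i - c))"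
    by (rule sum_mono) (use lem_exponent_le_tangent[OF c] nonneg in \<open>simp add: slope_def\<close>)
  also have "\<dots> = card I * lem_exponent c - slope * ((\<Sum>i\<in>I. a i) - card I * c)"
    by (simp add: sum_subtractf sum_distrib_left[symmetric] algebra_simps)
  also have "\<dots> = card I * lem_exponent c"
    using sum_one card_c by simp
  finally show ?thesis by (simp add: c_def)
qed

lemma prod_lem_factor_le:
  assumes "finite I" and "I \<noteq> {}"
    and nonneg: "\<And>i. i \<in> I \<Longrightarrow> a i \<ge> 0"
    and "(\<Sum>i\<in>I. a i) = 1"
  shows "(\<Prod>i\<in>I. lem_factor (a i)) \<le> lem_factor (1 / card I) ^ card I"
proof -
  have "(\<Prod>i\<in>I. lem_factor (a i)) = exp (\<Sum>i\<in>I. lem_exponent (a i))"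
    by (simp add: exp_sum[OF assms(1)] lem_factor_eq_exp nonneg)
  also have "\<dots> \<le> exp (card I * lem_exponent (1 / card I))"
    using sum_lem_exponent_le[OF assms] by simp
  also have "\<dots> = lem_factor (1 / card I) ^ card I"
    by (simp add: lem_factor_eq_exp exp_of_nat_mult)
  finally show ?thesis .
qed

lemma decreasing_chain_ge_last:
  fixes a :: "nat \<Rightarrow> 'a :: preorder"
  assumes "\<And>i. m \<le> i \<Longrightarrow> i < n \<Longrightarrow> a (i + 1) \<le> a i"
    and "m \<le> i" and "i \<le> n"
  shows "a n \<le> a i"
  using \<open>i \<le> n\<close>
proof (induction i rule: inc_induct)
  case base
  show ?case by simp
next
  case (step i)
  with assms(1,2) show ?case by (metis Suc_eq_plus1 order.trans)
qed

theorem lemma3p8: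
  fixes k :: nat and a :: "nat \<Rightarrow> real"
  assumes "k \<ge> 1"
    and "a 1 \<le> 1"
    and "\<And>i. 1 \<le> i \<Longrightarrow> i < k \<Longrightarrow> a (i + 1) \<le> a i"
    and "a k \<ge> 0"
    and "(\<Sum>i=1..k. a i) = 1"
  shows "(\<Prod>i=1..k. lem_factor (a i)) \<le> (\<Prod>i=1..k. lem_factor (1 / real k))"
proof -
  have nonneg: "a i \<ge> 0" if "i \<in> {1..k}" for i
    using decreasing_chain_ge_last[of 1 k a i] assms(3,4) that by force
  have "(\<Prod>i=1..k. lem_factor (a i)) \<le> lem_factor (1 / card {1..k}) ^ card {1..k}"
    by (rule prod_lem_factor_le) (use assms(1,5) nonneg in auto)
  then show ?thesis by simp
qed

end
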